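(* Let $X$ be a Banach space, $\mathcal F$ a filter of subsets of $\mathbb N$ with $\chi(\mathcal F)<\mathfrak p$, and $(e_n)_{n=1}^\infty$ an $\mathcal F$-basis of $X$ with partial sum maps $S_n$. Then there exists $A\in\mathcal F$ such that $\sup_{\nu\in A}\|S_\nu(x)\|<\infty$ for every $x\in X$ (i.e. $X_A=X$).
   Context: A filter $\mathcal F$ of subsets of $\mathbb N$ is a nonempty family not containing $\emptyset$, closed under finite intersections and supersets. A sequence $(e_n)$ in a Banach space $X$ is an $\mathcal F$-basis if for each $x\in X$ there is a unique scalar sequence $(a_n)$ with $x=\mathcal F\text{-}\lim_n\sum_{k=1}^n a_ke_k$ in norm (for every $\varepsilon>0$ there is $A\in\mathcal F$ with $\|x-\sum_{k\le n}a_ke_k\|<\varepsilon$ for $n\in A$); $e_n^\ast(x)=a_n$ and $S_n(x)=\sum_{k=1}^n e_k^\ast(x)e_k$. For $A\in\mathcal F$, $X_A=\{x\in X:\sup_{\nu\in A}\|S_\nu(x)\|<\infty\}$. The character $\chi(\mathcal F)$ is the least cardinality of a family $\mathcal B\subset\mathcal F$ such that every $A\in\mathcal F$ contains some $B\in\mathcal B$. The pseudointersection number $\mathfrak p$ is the least cardinal $\kappa$ for which there exists a family $\mathscr A$ of subsets of $\mathbb N$ with $|\mathscr A|=\kappa$, all finite intersections of members of $\mathscr A$ infinite, but no infinite $B\subset\mathbb N$ with $B\setminus A$ finite for all $A\in\mathscr A$. *)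

theory Defs
  imports "HOL-Analysis.Analysis"
begin

text \<open>Convention: the index set N = {1,2,...} of the paper is identified with
the HOL type nat via n \<mapsto> n - 1. So e k is the paper's e_(k+1), and the
partial sum with index n :: nat is the paper's S_(n+1) = sum of the first n+1 terms.\<close>

definition is_nat_filter :: "nat set set \<Rightarrow> bool" where
  "is_nat_filter F \<longleftrightarrow> F \<noteq> {} \<and> {} \<notin> F
     \<and> (\<forall>A\<in>F. \<forall>B\<in>F. A \<inter> B \<in> F)
     \<and> (\<forall>A\<in>F. \<forall>B. A \<subseteq> B \<longrightarrow> B \<in> F)"

definition F_limit :: "nat set set \<Rightarrow> (nat \<Rightarrow> 'a::real_normed_vector) \<Rightarrow> 'a \<Rightarrow> bool" where
  "F_limit F s x \<longleftrightarrow> (\<forall>\<epsilon>>0. \<exists>A\<in>F. \<forall>n\<in>A. norm (x - s n) < \<epsilon>)"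

definition F_basis :: "nat set set \<Rightarrow> (nat \<Rightarrow> 'a::real_normed_vector) \<Rightarrow> bool" where
  "F_basis F e \<longleftrightarrow> (\<forall>x. \<exists>!a::nat \<Rightarrow> real. F_limit F (\<lambda>n. \<Sum>k\<le>n. a k *\<^sub>R e k) x)"

definition coord_fun :: "nat set set \<Rightarrow> (nat \<Rightarrow> 'a::real_normed_vector) \<Rightarrow> 'a \<Rightarrow> nat \<Rightarrow> real" where
  "coord_fun F e x = (THE a. F_limit F (\<lambda>n. \<Sum>k\<le>n. a k *\<^sub>R e k) x)"

definition partial_sum :: "nat set set \<Rightarrow> (nat \<Rightarrow> 'a::real_normed_vector) \<Rightarrow> nat \<Rightarrow> 'a \<Rightarrow> 'a" where
  "partial_sum F e n x = (\<Sum>k\<le>n. coord_fun F e x k *\<^sub>R e k)"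

definition X_sub :: "nat set set \<Rightarrow> (nat \<Rightarrow> 'a::real_normed_vector) \<Rightarrow> nat set \<Rightarrow> 'a set" where
  "X_sub F e A = {x. bdd_above ((\<lambda>\<nu>. norm (partial_sum F e \<nu> x)) ` A)}"

definition is_filter_base :: "nat set set \<Rightarrow> nat set set \<Rightarrow> bool" where
  "is_filter_base F B \<longleftrightarrow> B \<subseteq> F \<and> (\<forall>A\<in>F. \<exists>C\<in>B. C \<subseteq> A)"

text \<open>Families witnessing the pseudointersection number: strong finite
intersection property but no infinite pseudointersection.\<close>
definition p_witness :: "nat set set \<Rightarrow> bool" where
  "p_witness \<A> \<longleftrightarrow>
     (\<forall>\<C>. finite \<C> \<and> \<C> \<noteq> {} \<and> \<C> \<subseteq> \<A> \<longrightarrow> infinite (\<Inter>\<C>))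
     \<and> \<not> (\<exists>B. infinite B \<and> (\<forall>A\<in>\<A>. finite (B - A)))"

text \<open>chi(F) < p: since both are minima of cardinalities, this holds iff some
base of F has cardinality strictly below that of every p-witness family.\<close>
definition character_lt_p :: "nat set set \<Rightarrow> bool" where
  "character_lt_p F \<longleftrightarrow> (\<exists>B. is_filter_base F B \<and>
     (\<forall>\<A>. p_witness \<A> \<longrightarrow> (card_of B, card_of \<A>) \<in> ordLess))"

end

theory Submission
  imports Defs
begin

text \<open>
  For C in F and a real m let level_set F e C m be the set
  of all x with norm (S_nu x) <= m for every nu in C.  Fix a base B of F of
  cardinality below p.  Every x lies in some level set along some C in B,
  because S_nu x tends to x along F.

  If B is finite, its intersection belongs to F and already has the required
  property.  Otherwise suppose that X_C differs from X for every C in B.  An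
  open-mapping style argument (successive approximation, combined with the
  fact that the partial sums of an absolutely convergent series again
  F-converge) shows that the closures of all these level sets are nowhere
  dense.  The space is separable, and in a separable complete metric space
  fewer than p closed nowhere dense sets cannot cover the space: finite
  strategies for shrinking balls are coded by natural numbers and the
  definition of p is applied to the resulting family.  Hence some x lies in
  none of the level sets, which is absurd.
\<close>

section \<open>Filters on the natural numbers and F-limits\<close>

lemma nat_filter_Int: "is_nat_filter F \<Longrightarrow> A \<in> F \<Longrightarrow> B \<in> F \<Longrightarrow> A \<inter> B \<in> F"
  unfolding is_nat_filter_def by blast

lemma nat_filter_nonempty: "is_nat_filter F \<Longrightarrow> \<exists>A. A \<in> F"
  unfolding is_nat_filter_def by blast

lemma nat_filter_Inter:
  assumes "is_nat_filter F"
  shows "finite \<B> \<Longrightarrow> \<B> \<noteq> {} \<Longrightarrow> \<B> \<subseteq> F \<Longrightarrow> \<Inter>\<B> \<in> F"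
proof (induction \<B> rule: finite_ne_induct)
  case (singleton A) then show ?case by simp
next
  case (insert A \<B>) then show ?case using nat_filter_Int[OF assms] by simp
qed

lemma F_limit_add:
  assumes F: "is_nat_filter F" and "F_limit F s x" "F_limit F t y"
  shows "F_limit F (\<lambda>n. s n + t n) (x + y)"
  unfolding F_limit_def
proof (intro allI impI)
  fix \<epsilon> :: real assume "\<epsilon> > 0"
  then obtain A B where A: "A \<in> F" "\<forall>n\<in>A. norm (x - s n) < \<epsilon>/2"
    and B: "B \<in> F" "\<forall>n\<in>B. norm (y - t n) < \<epsilon>/2"
    using assms unfolding F_limit_def by (meson half_gt_zero)
  have "norm (x + y - (s n + t n)) < \<epsilon>" if "n \<in> A \<inter> B" for n
    using A B that norm_triangle_lt[of "x - s n" "y - t n" \<epsilon>]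
    by (fastforce simp: algebra_simps)
  then show "\<exists>A\<in>F. \<forall>n\<in>A. norm (x + y - (s n + t n)) < \<epsilon>"
    using nat_filter_Int[OF F A(1) B(1)] by blast
qed

lemma F_limit_scale:
  assumes F: "is_nat_filter F" and lim: "F_limit F s x"
  shows "F_limit F (\<lambda>n. c *\<^sub>R s n) (c *\<^sub>R x)"
  unfolding F_limit_def
proof (intro allI impI)
  fix \<epsilon> :: real assume "\<epsilon> > 0"
  show "\<exists>A\<in>F. \<forall>n\<in>A. norm (c *\<^sub>R x - c *\<^sub>R s n) < \<epsilon>"
  proof (cases "c = 0")
    case True then show ?thesis using nat_filter_nonempty[OF F] \<open>\<epsilon> > 0\<close> by auto
  next
    case False
    then obtain A where A: "A \<in> F" "\<forall>n\<in>A. norm (x - s n) < \<epsilon> / \<bar>c\<bar>"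
      using lim \<open>\<epsilon> > 0\<close> unfolding F_limit_def by (meson divide_pos_pos zero_less_abs_iff)
    have "norm (c *\<^sub>R x - c *\<^sub>R s n) < \<epsilon>" if "n \<in> A" for n
    proof -
      have "norm (c *\<^sub>R x - c *\<^sub>R s n) = \<bar>c\<bar> * norm (x - s n)"
        by (metis norm_scaleR scaleR_right_diff_distrib)
      also have "\<dots> < \<epsilon>" using A that False by (simp add: field_simps)
      finally show ?thesis .
    qed
    then show ?thesis using A by blast
  qed
qed

section \<open>Coordinate functionals and partial sums of an F-basis\<close>

locale F_basis_space =
  fixes F :: "nat set set" and e :: "nat \<Rightarrow> 'a::banach"
  assumes filter: "is_nat_filter F" and basis: "F_basis F e"
begin

abbreviation "S \<equiv> partial_sum F e"
abbreviation "coord \<equiv> coord_fun F e"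

lemma coord_limit: "F_limit F (\<lambda>n. \<Sum>k\<le>n. coord x k *\<^sub>R e k) x"
proof -
  have "\<exists>!a::nat \<Rightarrow> real. F_limit F (\<lambda>n. \<Sum>k\<le>n. a k *\<^sub>R e k) x"
    using basis unfolding F_basis_def by blast
  then show ?thesis unfolding coord_fun_def by (rule theI')
qed

lemma coord_unique: "F_limit F (\<lambda>n. \<Sum>k\<le>n. a k *\<^sub>R e k) x \<Longrightarrow> coord x = a"
  using basis coord_limit unfolding F_basis_def by blast

lemma partial_sum_limit: "F_limit F (\<lambda>n. S n x) x"
  using coord_limit by (simp add: partial_sum_def)

lemma coord_add: "coord (x + y) = (\<lambda>k. coord x k + coord y k)"
  using F_limit_add[OF filter coord_limit[of x] coord_limit[of y]]
  by (intro coord_unique) (simp add: scaleR_add_left sum.distrib)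

lemma coord_scale: "coord (c *\<^sub>R x) = (\<lambda>k. c * coord x k)"
  using F_limit_scale[OF filter coord_limit[of x], of c]
  by (intro coord_unique) (simp add: scaleR_sum_right)

text \<open>Each partial sum map S_n is linear (it is not known a priori to be bounded).\<close>
lemma partial_sum_add: "S n (x + y) = S n x + S n y"
  by (simp add: partial_sum_def coord_add scaleR_add_left sum.distrib)

lemma partial_sum_scale: "S n (c *\<^sub>R x) = c *\<^sub>R S n x"
  by (simp add: partial_sum_def coord_scale scaleR_sum_right)

lemma partial_sum_diff: "S n (x - y) = S n x - S n y"
  using partial_sum_add[of n x "-y"] partial_sum_scale[of n "-1" y] by simp

lemma partial_sum_zero: "S n 0 = 0"
  using partial_sum_scale[of n 0 0] by simp

lemma partial_sum_sum: "S n (\<Sum>i<(m::nat). u i) = (\<Sum>i<m. S n (u i))"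
  by (induct m) (simp_all add: partial_sum_zero partial_sum_add)

text \<open>Sets of the filter are infinite: otherwise changing one coefficient
  beyond a finite A \<in> F would give a second expansion of 0.\<close>
lemma filter_set_infinite:
  assumes A: "A \<in> F" shows "infinite A"
proof
  assume fin: "finite A"
  define N where "N = Suc (Max A)"
  have lt: "n < N" if "n \<in> A" for n using fin that N_def by (simp add: le_imp_less_Suc)
  define a where "a = (coord 0)(N := coord 0 N + 1)"
  have "F_limit F (\<lambda>n. \<Sum>k\<le>n. a k *\<^sub>R e k) 0"
    unfolding F_limit_def
  proof (intro allI impI)
    fix \<epsilon> :: real assume "\<epsilon> > 0"
    then obtain B where B: "B \<in> F" "\<forall>n\<in>B. norm (0 - (\<Sum>k\<le>n. coord 0 k *\<^sub>R e k)) < \<epsilon>"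
      using coord_limit[of 0] unfolding F_limit_def by blast
    have "(\<Sum>k\<le>n. a k *\<^sub>R e k) = (\<Sum>k\<le>n. coord 0 k *\<^sub>R e k)" if "n \<in> A" for n
      using lt[OF that] by (intro sum.cong) (auto simp: a_def)
    then show "\<exists>A\<in>F. \<forall>n\<in>A. norm (0 - (\<Sum>k\<le>n. a k *\<^sub>R e k)) < \<epsilon>"
      using nat_filter_Int[OF filter A B(1)] B(2) by (intro bexI[of _ "A \<inter> B"]) auto
  qed
  then have "coord 0 = a" by (rule coord_unique)
  then show False unfolding a_def by (metis add_cancel_left_right fun_upd_same one_neq_zero)
qed

end


section \<open>Finite-dimensional spans in normed spaces\<close>

lemma distance_from_closed_span:
  fixes v :: "'a::real_normed_vector"
  assumes "closed (span T)" "v \<notin> span T"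
  obtains \<delta> where "\<delta> > 0" "\<And>a s. s \<in> span T \<Longrightarrow> \<bar>a\<bar> * \<delta> \<le> norm (a *\<^sub>R v - s)"
proof -
  have "open (- span T)" using assms(1) by auto
  then obtain \<delta> where \<delta>: "\<delta> > 0" "ball v \<delta> \<subseteq> - span T"
    using assms(2) by (meson ComplI open_contains_ball)
  have dist_v: "\<delta> \<le> norm (v - s)" if "s \<in> span T" for s
    using \<delta> that by (force simp: dist_norm)
  have "\<bar>a\<bar> * \<delta> \<le> norm (a *\<^sub>R v - s)" if "s \<in> span T" for s a
  proof (cases "a = 0")
    case True then show ?thesis by simp
  next
    case False
    have "\<bar>a\<bar> * \<delta> \<le> \<bar>a\<bar> * norm (v - (1/a) *\<^sub>R s)"
      using dist_v[OF span_scale[OF that]] by (simp add: mult_left_mono)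
    also have "\<dots> = norm (a *\<^sub>R v - s)"
      using False by (simp add: scaleR_right_diff_distrib flip: norm_scaleR)
    finally show ?thesis .
  qed
  then show ?thesis using that \<delta>(1) by blast
qed

text \<open>Adding one vector to a closed span keeps it closed: along a convergent
  sequence in the larger span the coefficients of the new vector form a Cauchy
  sequence, by the uniform distance above.\<close>
lemma closed_span_insert:
  fixes v :: "'a::real_normed_vector"
  assumes closed: "closed (span T)"
  shows "closed (span (insert v T))"
proof (cases "v \<in> span T")
  case True
  then show ?thesis using closed by (simp add: span_redundant)
next
  case False
  then obtain \<delta> where \<delta>: "\<delta> > 0"
    and dist_multiple: "\<And>a s. s \<in> span T \<Longrightarrow> \<bar>a\<bar> * \<delta> \<le> norm (a *\<^sub>R v - s)"
    using distance_from_closed_span[OF closed] by blast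
  show ?thesis
    unfolding closed_sequential_limits
  proof (intro allI impI, elim conjE)
    fix w l
    assume w: "\<forall>n. w n \<in> span (insert v T)" and wl: "w \<longlonglongrightarrow> l"
    have "\<forall>n. \<exists>k. w n - k *\<^sub>R v \<in> span T" using w by (simp add: span_insert)
    then obtain k where k: "\<And>n. w n - k n *\<^sub>R v \<in> span T" by metis
    have coeff_le: "\<bar>k n - k m\<bar> * \<delta> \<le> norm (w n - w m)" for n m
      using dist_multiple[OF span_diff[OF k[of m] k[of n]], of "k n - k m"]
      by (simp add: algebra_simps)
    have "Cauchy k"
    proof (rule CauchyI)
      fix \<epsilon> :: real assume "\<epsilon> > 0"
      then have "\<epsilon> * \<delta> > 0" using \<delta> by simp
      then obtain M where M: "\<forall>m\<ge>M. \<forall>n\<ge>M. norm (w m - w n) < \<epsilon> * \<delta>"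
        using CauchyD[OF LIMSEQ_imp_Cauchy[OF wl]] by blast
      have "norm (k m - k n) < \<epsilon>" if "M \<le> m" "M \<le> n" for m n
      proof -
        have "\<bar>k m - k n\<bar> * \<delta> < \<epsilon> * \<delta>" using M coeff_le[of m n] that by force
        then show ?thesis using \<delta> by simp
      qed
      then show "\<exists>M. \<forall>m\<ge>M. \<forall>n\<ge>M. norm (k m - k n) < \<epsilon>" by blast
    qed
    then obtain \<kappa> where "k \<longlonglongrightarrow> \<kappa>" using Cauchy_convergent_iff convergent_def by blast
    then have "(\<lambda>n. w n - k n *\<^sub>R v) \<longlonglongrightarrow> l - \<kappa> *\<^sub>R v"
      by (intro tendsto_intros wl)
    then have "l - \<kappa> *\<^sub>R v \<in> span T"
      using closed k by (rule_tac closed_sequentially) auto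
    then show "l \<in> span (insert v T)" by (auto simp: span_insert)
  qed
qed

lemma closed_span_finite:
  fixes T :: "'a::real_normed_vector set"
  assumes "finite T"
  shows "closed (span T)"
  using assms by (induction T rule: finite_induct) (simp_all add: closed_span_insert)

lemma span_image_sum:
  fixes e :: "nat \<Rightarrow> 'a::real_vector"
  assumes "finite K" "x \<in> span (e ` K)"
  shows "\<exists>g. x = (\<Sum>k\<in>K. g k *\<^sub>R e k)"
proof -
  let ?V = "{x. \<exists>g. x = (\<Sum>k\<in>K. g k *\<^sub>R e k)}"
  have "subspace ?V"
    unfolding subspace_def
  proof (intro conjI allI ballI)
    show "0 \<in> ?V" by (intro CollectI exI[of _ "\<lambda>_. 0"]) simp
  next
    fix x y assume "x \<in> ?V" "y \<in> ?V"
    then obtain g h where "x = (\<Sum>k\<in>K. g k *\<^sub>R e k)" "y = (\<Sum>k\<in>K. h k *\<^sub>R e k)" by blast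
    then show "x + y \<in> ?V"
      by (intro CollectI exI[of _ "\<lambda>k. g k + h k"]) (simp add: scaleR_add_left sum.distrib)
  next
    fix c x assume "x \<in> ?V"
    then obtain g where "x = (\<Sum>k\<in>K. g k *\<^sub>R e k)" by blast
    then show "c *\<^sub>R x \<in> ?V"
      by (intro CollectI exI[of _ "\<lambda>k. c * g k"]) (simp add: scaleR_sum_right)
  qed
  moreover have "e j \<in> ?V" if "j \<in> K" for j
  proof -
    have "(\<Sum>k\<in>K. (if k = j then 1 else 0) *\<^sub>R e k) = e j"
      using assms(1) that by (simp add: if_distrib[of "\<lambda>c. c *\<^sub>R _"] cong: if_cong)
    then show ?thesis by (metis (mono_tags) CollectI)
  qed
  ultimately have "span (e ` K) \<subseteq> ?V" by (intro span_minimal) auto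
  then show ?thesis using assms(2) by blast
qed

lemma suminf_in_closed_span:
  fixes f :: "nat \<Rightarrow> 'a::real_normed_vector"
  assumes "closed (span T)" "summable f" "\<And>i. f i \<in> span T"
  shows "suminf f \<in> span T"
  using assms summable_LIMSEQ[OF assms(2)]
  by (metis closed_sequentially span_sum)

lemma summable_majorant:
  fixes f :: "nat \<Rightarrow> 'a::banach"
  assumes "\<And>i. norm (f i) \<le> M i" "summable M"
  shows "summable f" "\<And>n. norm (\<Sum>i. f (i + n)) \<le> (\<Sum>i. M (i + n))"
proof -
  have sn: "summable (\<lambda>i. norm (f i))"
    using assms by (intro summable_comparison_test[OF _ assms(2)]) auto
  then show "summable f" by (rule summable_norm_cancel)
  fix n
  have sn': "summable (\<lambda>i. norm (f (i + n)))" using sn summable_iff_shift[of "\<lambda>i. norm (f i)" n] by simp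
  have sM': "summable (\<lambda>i. M (i + n))" using assms(2) summable_iff_shift[of M n] by simp
  show "norm (\<Sum>i. f (i + n)) \<le> (\<Sum>i. M (i + n))"
    using summable_norm[OF sn'] suminf_le[of "\<lambda>i. norm (f (i + n))" "\<lambda>i. M (i + n)"] assms sn' sM'
    by force
qed

section \<open>Gluing block expansions\<close>

lemma block_coefficients:
  fixes e w :: "nat \<Rightarrow> 'a::real_vector" and c :: "nat \<Rightarrow> nat"
  assumes c: "strict_mono c"
    and first: "w (c 0) \<in> span (e ` {..c 0})"
    and step: "\<And>j. w (c (Suc j)) - w (c j) \<in> span (e ` {c j<..c (Suc j)})"
  shows "\<exists>b. \<forall>j. (\<Sum>k\<le>c j. b k *\<^sub>R e k) = w (c j)"
proof -
  define K where "K j = (if j = 0 then {..c 0} else {c (j - 1)<..c j})" for j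
  define D where "D j = w (c j) - (if j = 0 then 0 else w (c (j - 1)))" for j
  have "D j \<in> span (e ` K j)" for j
    using first step[of "j - 1"] by (cases j) (simp_all add: K_def D_def)
  then have "\<forall>j. \<exists>g. D j = (\<Sum>k\<in>K j. g k *\<^sub>R e k)"
    by (intro allI span_image_sum) (simp_all add: K_def)
  then obtain g where g: "\<And>j. D j = (\<Sum>k\<in>K j. g j k *\<^sub>R e k)" by metis
  define block where "block k = (LEAST j. k \<le> c j)" for k
  have block: "block k = j" if "k \<in> K j" for k j
  proof -
    have "\<not> k \<le> c j'" if "j' < j" for j'
      using \<open>k \<in> K j\<close> that strict_mono_less_eq[OF c, of j' "j - 1"] by (auto simp: K_def)
    moreover have "k \<le> c j" using that by (auto simp: K_def split: if_splits)
    ultimately show ?thesis unfolding block_def by (intro Least_equality) (meson not_le)+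
  qed
  define b where "b k = g (block k) k" for k
  have "(\<Sum>k\<le>c j. b k *\<^sub>R e k) = w (c j)" for j
  proof (induction j)
    case 0
    have "block k = 0" if "k \<le> c 0" for k using block[of k 0] that by (simp add: K_def)
    then have "(\<Sum>k\<le>c 0. b k *\<^sub>R e k) = (\<Sum>k\<in>K 0. g 0 k *\<^sub>R e k)"
      by (intro sum.cong) (auto simp: K_def b_def)
    then show ?case by (simp add: D_def flip: g)
  next
    case (Suc j)
    have "c j \<le> c (Suc j)" using c by (simp add: strict_mono_less_eq)
    then have "{..c (Suc j)} = {..c j} \<union> K (Suc j)" "{..c j} \<inter> K (Suc j) = {}"
      by (auto simp: K_def)
    then have "(\<Sum>k\<le>c (Suc j). b k *\<^sub>R e k)
        = (\<Sum>k\<le>c j. b k *\<^sub>R e k) + (\<Sum>k\<in>K (Suc j). b k *\<^sub>R e k)"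
      by (simp add: sum.union_disjoint K_def)
    also have "(\<Sum>k\<in>K (Suc j). b k *\<^sub>R e k) = (\<Sum>k\<in>K (Suc j). g (Suc j) k *\<^sub>R e k)"
      by (intro sum.cong) (auto simp: b_def block)
    finally show ?case using Suc.IH by (simp add: D_def flip: g)
  qed
  then show ?thesis by blast
qed

context F_basis_space
begin

lemma partial_sum_in_span: "S n x \<in> span (e ` {..n})"
  unfolding partial_sum_def by (intro span_sum span_scale span_base) auto

lemma partial_sum_diff_in_span:
  assumes "m \<le> n"
  shows "S n x - S m x \<in> span (e ` {m<..n})"
proof -
  have "{..n} = {..m} \<union> {m<..n}" "{..m} \<inter> {m<..n} = {}" using assms by auto
  then have "S n x - S m x = (\<Sum>k\<in>{m<..n}. coord x k *\<^sub>R e k)"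
    unfolding partial_sum_def by (simp add: sum.union_disjoint)
  also have "\<dots> \<in> span (e ` {m<..n})" by (intro span_sum span_scale span_base) auto
  finally show ?thesis .
qed

lemma termwise_sum_in_span:
  assumes "summable (\<lambda>i. S n (u i))"
  shows "(\<Sum>i. S n (u i)) \<in> span (e ` {..n})"
  using assms partial_sum_in_span by (intro suminf_in_closed_span closed_span_finite) auto

lemma termwise_sum_diff_in_span:
  assumes "summable (\<lambda>i. S m (u i))" "summable (\<lambda>i. S n (u i))" "m \<le> n"
  shows "(\<Sum>i. S n (u i)) - (\<Sum>i. S m (u i)) \<in> span (e ` {m<..n})"
proof -
  have "(\<Sum>i. S n (u i)) - (\<Sum>i. S m (u i)) = (\<Sum>i. S n (u i) - S m (u i))"
    using assms by (simp add: suminf_diff)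
  also have "\<dots> \<in> span (e ` {m<..n})"
    using assms partial_sum_diff_in_span
    by (intro suminf_in_closed_span closed_span_finite summable_diff) auto
  finally show ?thesis .
qed

lemma termwise_sums_approach_limit:
  assumes bound: "\<And>i \<nu>. \<nu> \<in> C \<Longrightarrow> norm (S \<nu> (u i)) \<le> M i" and M: "summable M"
    and y: "(\<lambda>n. \<Sum>i<n. u i) \<longlonglongrightarrow> y" and \<epsilon>: "\<epsilon> > 0"
  shows "\<exists>A\<in>F. \<forall>\<nu>\<in>A \<inter> C. norm (y - (\<Sum>i. S \<nu> (u i))) < \<epsilon>"
proof -
  obtain N1 where N1: "\<forall>n\<ge>N1. norm (\<Sum>i. M (i + n)) < \<epsilon> / 3"
    using suminf_exist_split[OF _ M, of "\<epsilon> / 3"] \<epsilon> by auto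
  obtain N2 where N2: "\<forall>n\<ge>N2. norm ((\<Sum>i<n. u i) - y) < \<epsilon> / 3"
    using y \<epsilon> unfolding LIMSEQ_iff by (meson divide_pos_pos zero_less_numeral)
  define n where "n = max N1 N2"
  define Y where "Y = (\<Sum>i<n. u i)"
  have tail_M: "\<bar>\<Sum>i. M (i + n)\<bar> < \<epsilon> / 3" using N1 n_def by simp
  have y_Y: "norm (y - Y) < \<epsilon> / 3" using N2 n_def Y_def by (simp add: norm_minus_commute)
  obtain A where A: "A \<in> F" "\<forall>\<nu>\<in>A. norm (Y - S \<nu> Y) < \<epsilon> / 3"
    using partial_sum_limit[of Y] \<epsilon> unfolding F_limit_def by (meson divide_pos_pos zero_less_numeral)
  have "norm (y - (\<Sum>i. S \<nu> (u i))) < \<epsilon>" if \<nu>: "\<nu> \<in> A \<inter> C" for \<nu>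
  proof -
    have bound\<nu>: "\<And>i. norm (S \<nu> (u i)) \<le> M i" using bound \<nu> by blast
    define T where "T = (\<Sum>i. S \<nu> (u (i + n)))"
    have "(\<Sum>i. S \<nu> (u i)) = T + S \<nu> Y"
      using suminf_split_initial_segment[OF summable_majorant(1)[OF bound\<nu> M], of n]
      by (simp add: T_def Y_def partial_sum_sum)
    then have "norm (y - (\<Sum>i. S \<nu> (u i))) = norm (((y - Y) + (Y - S \<nu> Y)) - T)"
      by (simp add: algebra_simps)
    also have "\<dots> \<le> norm ((y - Y) + (Y - S \<nu> Y)) + norm T" by (rule norm_triangle_ineq4)
    finally have "norm (y - (\<Sum>i. S \<nu> (u i))) \<le> norm (y - Y) + norm (Y - S \<nu> Y) + norm T"
      using norm_triangle_ineq[of "y - Y" "Y - S \<nu> Y"] by linarith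
    moreover have "norm T < \<epsilon> / 3"
      using summable_majorant(2)[OF bound\<nu> M, of n] abs_ge_self[of "\<Sum>i. M (i + n)"] tail_M
      unfolding T_def by linarith
    moreover have "norm (Y - S \<nu> Y) < \<epsilon> / 3" using A \<nu> by blast
    ultimately show ?thesis using y_Y by linarith
  qed
  then show ?thesis using A by blast
qed

text \<open>Indeed
  S_nu y is the termwise sum of the S_nu (u i): these termwise sums lie in
  the closed finite-dimensional blocks spanned by the e k, so they come from
  a single coefficient sequence b, which F-converges to y and hence is the
  coordinate sequence of y.\<close>
lemma partial_sums_of_series_bounded:
  assumes C: "C \<in> F" and bound: "\<And>i \<nu>. \<nu> \<in> C \<Longrightarrow> norm (S \<nu> (u i)) \<le> M i"
    and M: "summable M" and y: "(\<lambda>n. \<Sum>i<n. u i) \<longlonglongrightarrow> y"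
  shows "\<forall>\<nu>\<in>C. norm (S \<nu> y) \<le> suminf M"
proof -
  define w where "w \<nu> = (\<Sum>i. S \<nu> (u i))" for \<nu>
  have summ: "summable (\<lambda>i. S \<nu> (u i))" if "\<nu> \<in> C" for \<nu>
    using summable_majorant(1)[OF bound[OF that] M] .
  define c where "c = enumerate C"
  have infC: "infinite C" using C by (rule filter_set_infinite)
  then have cC: "c j \<in> C" and c: "strict_mono c" and range_c: "range c = C" for j
    by (simp_all add: c_def enumerate_in_set strict_mono_enumerate range_enumerate)
  have "w (c 0) \<in> span (e ` {..c 0})"
    unfolding w_def using summ[OF cC] by (rule termwise_sum_in_span)
  moreover have "w (c (Suc j)) - w (c j) \<in> span (e ` {c j<..c (Suc j)})" for j
    unfolding w_def using summ[OF cC] summ[OF cC] c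
    by (intro termwise_sum_diff_in_span) (auto simp: strict_mono_less_eq)
  ultimately obtain b where b: "\<And>j. (\<Sum>k\<le>c j. b k *\<^sub>R e k) = w (c j)"
    using block_coefficients[OF c] by blast
  have b_on_C: "(\<Sum>k\<le>\<nu>. b k *\<^sub>R e k) = w \<nu>" if \<nu>: "\<nu> \<in> C" for \<nu>
  proof -
    obtain j where "\<nu> = c j" using \<nu> range_c by blast
    then show ?thesis using b by simp
  qed
  have "F_limit F (\<lambda>n. \<Sum>k\<le>n. b k *\<^sub>R e k) y"
    unfolding F_limit_def
  proof (intro allI impI)
    fix \<epsilon> :: real assume "\<epsilon> > 0"
    then obtain A where "A \<in> F" "\<forall>\<nu>\<in>A \<inter> C. norm (y - w \<nu>) < \<epsilon>"
      using termwise_sums_approach_limit[OF bound M y] unfolding w_def by blast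
    then show "\<exists>A\<in>F. \<forall>n\<in>A. norm (y - (\<Sum>k\<le>n. b k *\<^sub>R e k)) < \<epsilon>"
      using nat_filter_Int[OF filter _ C] b_on_C by (intro bexI[of _ "A \<inter> C"]) auto
  qed
  then have "coord y = b" by (rule coord_unique)
  show ?thesis
  proof
    fix \<nu> assume \<nu>: "\<nu> \<in> C"
    have "S \<nu> y = w \<nu>" using b_on_C[OF \<nu>] \<open>coord y = b\<close> by (simp add: partial_sum_def)
    moreover have "norm (\<Sum>i. S \<nu> (u (i + 0))) \<le> (\<Sum>i. M (i + 0))"
      using summable_majorant(2)[OF bound[OF \<nu>] M] .
    then have "norm (w \<nu>) \<le> suminf M" by (simp only: w_def add_0_right)
    ultimately show "norm (S \<nu> y) \<le> suminf M" by (simp only:)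
  qed
qed

end

section \<open>Successive approximation\<close>

lemma halving_iteration:
  fixes G :: "'a::real_normed_vector \<Rightarrow> 'a" and x :: 'a
  assumes half: "\<And>z. norm (z - G z) \<le> norm z / 2"
  defines "r \<equiv> \<lambda>n. ((\<lambda>z. z - G z) ^^ n) x"
  shows "\<And>n. norm (r n) \<le> norm x / 2 ^ n" and "(\<lambda>n. \<Sum>i<n. G (r i)) \<longlonglongrightarrow> x"
proof -
  have r_Suc: "r (Suc n) = r n - G (r n)" for n by (simp add: r_def)
  show r_bound: "norm (r n) \<le> norm x / 2 ^ n" for n
  proof (induction n)
    case 0 then show ?case by (simp add: r_def)
  next
    case (Suc n)
    have "norm (r (Suc n)) \<le> norm (r n) / 2" using half r_Suc by simp
    also have "\<dots> \<le> norm x / 2 ^ n / 2" using Suc by simp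
    finally show ?case by simp
  qed
  have sums: "(\<Sum>i<n. G (r i)) = x - r n" for n
    by (induction n) (simp_all add: r_Suc, simp add: r_def)
  have "(\<lambda>n. norm x / 2 ^ n) \<longlonglongrightarrow> 0"
    by (intro LIMSEQ_divide_realpow_zero) auto
  then have "r \<longlonglongrightarrow> 0"
    by (rule Lim_null_comparison[rotated]) (simp add: r_bound)
  then have "(\<lambda>n. x - r n) \<longlonglongrightarrow> x - 0" by (intro tendsto_diff tendsto_const)
  then show "(\<lambda>n. \<Sum>i<n. G (r i)) \<longlonglongrightarrow> x" by (simp add: sums)
qed

context F_basis_space
begin

lemma X_sub_UNIV_if_approximable:
  assumes C: "C \<in> F" and c: "c \<ge> 0"
    and approx: "\<And>z. \<exists>u. (\<forall>\<nu>\<in>C. norm (S \<nu> u) \<le> c * norm z) \<and> norm (z - u) \<le> norm z / 2"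
  shows "X_sub F e C = UNIV"
proof -
  obtain G where G: "\<And>z. (\<forall>\<nu>\<in>C. norm (S \<nu> (G z)) \<le> c * norm z) \<and> norm (z - G z) \<le> norm z / 2"
    using approx by metis
  have "x \<in> X_sub F e C" for x
  proof -
    define r where "r n = ((\<lambda>z. z - G z) ^^ n) x" for n
    define M where "M i = c * norm x * (1/2) ^ i" for i
    have r: "norm (r n) \<le> norm x / 2 ^ n" "(\<lambda>n. \<Sum>i<n. G (r i)) \<longlonglongrightarrow> x" for n
      using halving_iteration[where G = G and x = x] G unfolding r_def by auto
    have "summable M" unfolding M_def by (intro summable_mult summable_geometric) simp
    moreover have "norm (S \<nu> (G (r i))) \<le> M i" if "\<nu> \<in> C" for i \<nu>
    proof -
      have "norm (S \<nu> (G (r i))) \<le> c * norm (r i)" using G that by blast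
      also have "\<dots> \<le> c * (norm x / 2 ^ i)" using r(1) c by (rule mult_left_mono)
      finally show ?thesis by (simp add: M_def power_divide)
    qed
    ultimately have "\<forall>\<nu>\<in>C. norm (S \<nu> x) \<le> suminf M"
      using partial_sums_of_series_bounded[OF C _ _ r(2)] by blast
    then show ?thesis unfolding X_sub_def by (intro CollectI bdd_aboveI2) blast
  qed
  then show ?thesis by blast
qed

end

definition level_set :: "nat set set \<Rightarrow> (nat \<Rightarrow> 'a::real_normed_vector) \<Rightarrow> nat set \<Rightarrow> real \<Rightarrow> 'a set" where
  "level_set F e C m = {x. \<forall>\<nu>\<in>C. norm (partial_sum F e \<nu> x) \<le> m}"

lemma ball_in_closure_differences:
  fixes U :: "'a::real_normed_vector set"
  assumes ball: "ball x0 r \<subseteq> closure U" and z: "norm z < r" and \<epsilon>: "\<epsilon> > 0"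
  shows "\<exists>p\<in>U. \<exists>q\<in>U. norm (z - (p - q)) < \<epsilon>"
proof -
  have "r > 0" using z norm_ge_zero[of z] by linarith
  then have "x0 + z \<in> closure U" "x0 \<in> closure U" using ball z by (auto simp: dist_norm)
  then obtain p q where p: "p \<in> U" "dist p (x0 + z) < \<epsilon>/2" and q: "q \<in> U" "dist q x0 < \<epsilon>/2"
    using \<epsilon> closure_approachable half_gt_zero by metis
  have "z - (p - q) = (x0 + z - p) - (x0 - q)" by (simp add: algebra_simps)
  then have "norm (z - (p - q)) \<le> norm (x0 + z - p) + norm (x0 - q)"
    by (metis norm_triangle_ineq4)
  also have "\<dots> < \<epsilon>" using p q by (simp add: dist_norm norm_minus_commute)
  finally show ?thesis using p q by blast
qed

context F_basis_space
begin

text \<open>If a ball of radius r lies in the closure of the level set for m, then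
  every z is approximated up to norm z / 2 by a vector whose partial sums
  along C are bounded by (4 m / r) norm z: rescale z into the ball and use
  differences of elements of the level set.\<close>
lemma level_set_approximation:
  assumes ball: "ball x0 r \<subseteq> closure (level_set F e C m)" and r: "r > 0" and m: "m \<ge> 0"
  shows "\<exists>u. (\<forall>\<nu>\<in>C. norm (S \<nu> u) \<le> (4 * m / r) * norm z) \<and> norm (z - u) \<le> norm z / 2"
proof (cases "z = 0")
  case True
  then show ?thesis using m r by (intro exI[of _ 0]) (simp add: partial_sum_zero)
next
  case False
  define t where "t = r / (2 * norm z)"
  have t: "t > 0" "norm (t *\<^sub>R z) < r" using r False by (simp_all add: t_def)
  obtain p q where pq: "p \<in> level_set F e C m" "q \<in> level_set F e C m"
    and close: "norm (t *\<^sub>R z - (p - q)) < t * (norm z / 2)"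
    using ball_in_closure_differences[OF ball t(2), of "t * (norm z / 2)"] t(1) False by auto
  define u where "u = (1/t) *\<^sub>R (p - q)"
  have "norm (S \<nu> u) \<le> (4 * m / r) * norm z" if "\<nu> \<in> C" for \<nu>
  proof -
    have "norm (S \<nu> (p - q)) \<le> 2 * m"
      using pq that norm_triangle_ineq4[of "S \<nu> p" "S \<nu> q"]
      by (force simp: level_set_def partial_sum_diff)
    then have "(1/t) * norm (S \<nu> (p - q)) \<le> (1/t) * (2 * m)"
      using t(1) by (simp add: divide_right_mono)
    also have "\<dots> = (4 * m / r) * norm z" using r False by (simp add: t_def field_simps)
    finally show ?thesis using t(1) by (simp add: u_def partial_sum_scale)
  qed
  moreover have "norm (z - u) \<le> norm z / 2"
  proof -
    have "z - u = (1/t) *\<^sub>R (t *\<^sub>R z - (p - q))" using t(1) by (simp add: u_def algebra_simps)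
    then have "norm (z - u) = (1/t) * norm (t *\<^sub>R z - (p - q))" using t(1) by simp
    also have "\<dots> \<le> (1/t) * (t * (norm z / 2))"
      using close t(1) by (intro mult_left_mono) simp_all
    finally show ?thesis using t(1) by simp
  qed
  ultimately show ?thesis by blast
qed

lemma X_sub_UNIV_if_level_set_somewhere_dense:
  assumes C: "C \<in> F" and int: "interior (closure (level_set F e C m)) \<noteq> {}"
  shows "X_sub F e C = UNIV"
proof -
  have "level_set F e C m \<subseteq> level_set F e C \<bar>m\<bar>" by (auto simp: level_set_def)
  then have "interior (closure (level_set F e C \<bar>m\<bar>)) \<noteq> {}"
    using int interior_mono[OF closure_mono] by blast
  then obtain x0 r where r: "r > 0" "ball x0 r \<subseteq> closure (level_set F e C \<bar>m\<bar>)"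
    by (meson ex_in_conv open_contains_ball open_interior interior_subset subset_trans)
  show ?thesis
    using X_sub_UNIV_if_approximable[OF C _ level_set_approximation[OF r(2) r(1)]] r(1) by simp
qed

end

section \<open>Fewer than p nowhere dense sets do not cover a separable complete space\<close>

definition below_p :: "'i set \<Rightarrow> bool" where
  "below_p I \<longleftrightarrow> (\<forall>\<A>. p_witness \<A> \<longrightarrow> (card_of I, card_of \<A>) \<in> ordLess)"

lemma below_p_image: "below_p I \<Longrightarrow> below_p (f ` I)"
  unfolding below_p_def using card_of_image ordLeq_ordLess_trans by blast

lemma below_p_Times_nat:
  assumes "infinite I" "below_p I"
  shows "below_p (I \<times> (UNIV :: nat set))"
proof -
  have "(card_of (I \<times> (UNIV :: nat set)), card_of I) \<in> ordIso"
    using card_of_Times_infinite[OF assms(1), of "UNIV :: nat set"]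
      infinite_iff_card_of_nat[of I] assms(1) by auto
  then show ?thesis using assms(2) ordIso_ordLess_trans unfolding below_p_def by blast
qed

text \<open>The defining property of p, transported along the injection of a
  countable type into the natural numbers: a nonempty family below p of sets
  with infinite finite intersections has an infinite pseudointersection.\<close>
lemma small_family_pseudointersection:
  fixes Y :: "'i \<Rightarrow> 'b::countable set"
  assumes small: "below_p I" and "I \<noteq> {}"
    and sfip: "\<And>J. finite J \<Longrightarrow> J \<noteq> {} \<Longrightarrow> J \<subseteq> I \<Longrightarrow> infinite (\<Inter>\<alpha>\<in>J. Y \<alpha>)"
  shows "\<exists>Z. infinite Z \<and> (\<forall>\<alpha>\<in>I. finite (Z - Y \<alpha>))"
proof -
  define \<Y> where "\<Y> = (\<lambda>\<alpha>. to_nat ` Y \<alpha>) ` I"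
  have "\<not> p_witness \<Y>"
  proof
    assume "p_witness \<Y>"
    then have "(card_of \<Y>, card_of \<Y>) \<in> ordLess"
      using below_p_image[OF small, of "\<lambda>\<alpha>. to_nat ` Y \<alpha>"] unfolding below_p_def \<Y>_def by blast
    then show False using ordLess_irreflexive by blast
  qed
  moreover have "infinite (\<Inter>\<C>)" if \<C>: "finite \<C>" "\<C> \<noteq> {}" "\<C> \<subseteq> \<Y>" for \<C>
  proof -
    obtain J where J: "J \<subseteq> I" "finite J" "\<C> = (\<lambda>\<alpha>. to_nat ` Y \<alpha>) ` J"
      using finite_subset_image[OF \<C>(1) \<C>(3)[unfolded \<Y>_def]] by blast
    then have "J \<noteq> {}" using \<C>(2) by blast
    then have "\<Inter>\<C> = to_nat ` (\<Inter>\<alpha>\<in>J. Y \<alpha>)"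
      using J(3) image_INT[of to_nat UNIV J Y] by (auto simp: inj_to_nat)
    then show ?thesis
      using sfip[OF J(2) \<open>J \<noteq> {}\<close> J(1)] finite_imageD inj_to_nat by (metis inj_on_subset top_greatest)
  qed
  ultimately obtain B where B: "infinite B" "\<forall>A\<in>\<Y>. finite (B - A)"
    unfolding p_witness_def by blast
  define Z :: "'b set" where "Z = to_nat -` B"
  have finZ: "finite (Z - Y \<alpha>)" if "\<alpha> \<in> I" for \<alpha>
  proof -
    have "finite (to_nat -` (B - to_nat ` Y \<alpha>))"
      using B(2) that by (intro finite_vimageI) (auto simp: \<Y>_def inj_to_nat)
    moreover have "Z - Y \<alpha> \<subseteq> to_nat -` (B - to_nat ` Y \<alpha>)"
      unfolding Z_def using inj_to_nat by (auto dest: injD)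
    ultimately show ?thesis by (rule finite_subset[rotated])
  qed
  obtain \<alpha> where \<alpha>: "\<alpha> \<in> I" using \<open>I \<noteq> {}\<close> by blast
  have "infinite Z"
  proof
    assume "finite Z"
    moreover have "B \<inter> to_nat ` Y \<alpha> \<subseteq> to_nat ` Z" unfolding Z_def by auto
    ultimately have "finite (B \<inter> to_nat ` Y \<alpha>)" by (meson finite_imageI finite_subset)
    moreover have "finite (B - to_nat ` Y \<alpha>)" using B(2) \<alpha> unfolding \<Y>_def by blast
    ultimately have "finite B" by (metis Int_Diff_Un finite_UnI)
    then show False using B(1) by blast
  qed
  then show ?thesis using finZ by blast
qed

text \<open>Conditions of the shrinking-ball game in a space with dense sequence dn:
  a pair (i, k) codes the closed ball around dn i of radius 2^-k; a condition
  is refined by a strictly smaller one whose ball lies inside the open ball.\<close>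
definition cond_ball :: "(nat \<Rightarrow> 'a::metric_space) \<Rightarrow> nat \<times> nat \<Rightarrow> 'a set" where
  "cond_ball dn s = cball (dn (fst s)) ((1/2) ^ snd s)"

definition refines :: "(nat \<Rightarrow> 'a::metric_space) \<Rightarrow> nat \<times> nat \<Rightarrow> nat \<times> nat \<Rightarrow> bool" where
  "refines dn s s' \<longleftrightarrow> snd s < snd s' \<and> cond_ball dn s' \<subseteq> ball (dn (fst s)) ((1/2) ^ snd s)"

text \<open>A finite strategy answers the condition coded by j with a refinement l ! j.\<close>
definition strategy :: "(nat \<Rightarrow> 'a::metric_space) \<Rightarrow> (nat \<times> nat) list \<Rightarrow> bool" where
  "strategy dn l \<longleftrightarrow> (\<forall>j<length l. refines dn (from_nat j) (l ! j))"

definition avoiding_strategies ::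
    "(nat \<Rightarrow> 'a::metric_space) \<Rightarrow> 'a set \<Rightarrow> nat \<Rightarrow> (nat \<times> nat) list set" where
  "avoiding_strategies dn N m =
     {l. strategy dn l \<and> m \<le> length l \<and> (\<forall>j<length l. cond_ball dn (l ! j) \<inter> N = {})}"

lemma refinement_avoiding:
  fixes dn :: "nat \<Rightarrow> 'a::metric_space"
  assumes dn_dense: "\<And>x \<epsilon>. \<epsilon> > 0 \<Longrightarrow> \<exists>i. dist (dn i) x < \<epsilon>"
    and N: "closed N" "interior N = {}"
  shows "\<exists>s'. refines dn s s' \<and> cond_ball dn s' \<inter> N = {}"
proof -
  obtain i k where s: "s = (i, k)" by fastforce
  let ?B = "ball (dn i) ((1/2) ^ k)"
  have "\<not> ?B \<subseteq> N"
  proof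
    assume "?B \<subseteq> N"
    then have "?B \<subseteq> interior N" by (simp add: interior_maximal)
    moreover have "dn i \<in> ?B" by simp
    ultimately show False using N by blast
  qed
  then obtain y where y: "y \<in> ?B" "y \<notin> N" by blast
  have "open (- N \<inter> ?B)" using N by auto
  then obtain \<rho> where \<rho>: "\<rho> > 0" "ball y \<rho> \<subseteq> - N \<inter> ?B"
    using y by (meson ComplI IntI open_contains_ball)
  obtain n where n: "(1/2::real) ^ n < \<rho> / 3"
    using real_arch_pow_inv[of "\<rho>/3" "1/2"] \<rho> by auto
  define k' where "k' = max n (Suc k)"
  have "(1/2::real) ^ k' \<le> (1/2) ^ n" unfolding k'_def by (intro power_decreasing) auto
  then have k': "(1/2::real) ^ k' < \<rho> / 3" "k < k'" using n by (linarith, simp add: k'_def)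
  obtain i' where i': "dist (dn i') y < \<rho> / 3"
    using dn_dense \<rho> by (meson zero_less_divide_iff zero_less_numeral)
  have "cond_ball dn (i', k') \<subseteq> ball y \<rho>"
  proof
    fix z assume "z \<in> cond_ball dn (i', k')"
    then have "dist (dn i') z \<le> (1/2) ^ k'" by (simp add: cond_ball_def)
    then show "z \<in> ball y \<rho>"
      using \<rho>(1) i' k' dist_triangle[of y z "dn i'"] by (simp add: dist_commute)
  qed
  then have "refines dn s (i', k') \<and> cond_ball dn (i', k') \<inter> N = {}"
    using \<rho> k' s by (auto simp: refines_def)
  then show ?thesis by blast
qed

lemma closed_nowhere_dense_finite_Union:
  fixes N :: "'i \<Rightarrow> 'a::topological_space set"
  assumes "finite J" "\<And>\<alpha>. \<alpha> \<in> J \<Longrightarrow> closed (N \<alpha>) \<and> interior (N \<alpha>) = {}"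
  shows "closed (\<Union>\<alpha>\<in>J. N \<alpha>) \<and> interior (\<Union>\<alpha>\<in>J. N \<alpha>) = {}"
  using assms
proof (induction J rule: finite_induct)
  case empty then show ?case by simp
next
  case (insert a J)
  then have "closed (\<Union>\<alpha>\<in>J. N \<alpha>)" "interior (\<Union>\<alpha>\<in>J. N \<alpha>) = {}"
    and "closed (N a)" "interior (N a) = {}" by auto
  then show ?case
    using interior_closed_Un_empty_interior[of "\<Union>\<alpha>\<in>J. N \<alpha>" "N a"]
    by (simp add: Un_commute closed_Un)
qed

text \<open>Strategies avoiding finitely many closed nowhere dense sets exist in
  every length: answer each condition by one refinement avoiding their union.\<close>
lemma avoiding_strategies_infinite:
  fixes dn :: "nat \<Rightarrow> 'a::metric_space"
  assumes dn_dense: "\<And>x \<epsilon>. \<epsilon> > 0 \<Longrightarrow> \<exists>i. dist (dn i) x < \<epsilon>"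
    and J: "finite J"
    and N: "\<And>\<alpha>. \<alpha> \<in> J \<Longrightarrow> closed (N \<alpha>) \<and> interior (N \<alpha>) = {}"
  shows "infinite (\<Inter>\<alpha>\<in>J. avoiding_strategies dn (N \<alpha>) (m \<alpha>))"
proof
  let ?NN = "\<Union>\<alpha>\<in>J. N \<alpha>"
  have NN: "closed ?NN" "interior ?NN = {}" using closed_nowhere_dense_finite_Union[OF J N] by auto
  have "\<forall>s. \<exists>s'. refines dn s s' \<and> cond_ball dn s' \<inter> ?NN = {}"
    using refinement_avoiding[OF dn_dense NN] by blast
  then obtain answer where answer: "\<And>s. refines dn s (answer s) \<and> cond_ball dn (answer s) \<inter> ?NN = {}"
    by metis
  define l where "l L = map (\<lambda>j. answer (from_nat j)) [0..<L]" for L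
  have in_all: "l L \<in> (\<Inter>\<alpha>\<in>J. avoiding_strategies dn (N \<alpha>) (m \<alpha>))" if "(\<Sum>\<alpha>\<in>J. m \<alpha>) \<le> L" for L
  proof -
    have "m \<alpha> \<le> L" if "\<alpha> \<in> J" for \<alpha>
      using member_le_sum[of \<alpha> J m] J \<open>(\<Sum>\<alpha>\<in>J. m \<alpha>) \<le> L\<close> that by simp
    moreover have "strategy dn (l L)" using answer by (simp add: strategy_def l_def)
    moreover have "cond_ball dn (l L ! j) \<inter> N \<alpha> = {}" if "\<alpha> \<in> J" "j < L" for \<alpha> j
      using answer that by (fastforce simp: l_def)
    ultimately show ?thesis by (auto simp: avoiding_strategies_def l_def)
  qed
  assume "finite (\<Inter>\<alpha>\<in>J. avoiding_strategies dn (N \<alpha>) (m \<alpha>))"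
  then obtain B where "\<forall>l\<in>(\<Inter>\<alpha>\<in>J. avoiding_strategies dn (N \<alpha>) (m \<alpha>)). length l \<le> B"
    using finite_nat_set_iff_bounded_le[of "length ` _"] by (metis finite_imageI imageI)
  then have "length (l ((\<Sum>\<alpha>\<in>J. m \<alpha>) + B + 1)) \<le> B" using in_all by simp
  then show False by (simp add: l_def)
qed

lemma refining_chain_point:
  fixes dn :: "nat \<Rightarrow> 'a::complete_space"
  assumes refine: "\<And>i. refines dn (\<sigma> i) (\<sigma> (Suc i))"
  obtains x where "\<And>i. x \<in> cond_ball dn (\<sigma> i)"
proof (rule decreasing_closed_nest[of "\<lambda>i. cond_ball dn (\<sigma> i)"])
  show "closed (cond_ball dn (\<sigma> i))" "cond_ball dn (\<sigma> i) \<noteq> {}" for i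
    by (simp_all add: cond_ball_def)
  show "cond_ball dn (\<sigma> j) \<subseteq> cond_ball dn (\<sigma> i)" if "i \<le> j" for i j
    using lift_Suc_antimono_le[of "\<lambda>i. cond_ball dn (\<sigma> i)", OF _ that] refine
    by (force simp: refines_def cond_ball_def)
  have radius: "i \<le> snd (\<sigma> i)" for i
    by (induction i) (use refine in \<open>auto simp: refines_def Suc_le_eq intro: le_less_trans\<close>)
  show "\<exists>n. \<forall>x\<in>cond_ball dn (\<sigma> n). \<forall>y\<in>cond_ball dn (\<sigma> n). dist x y < \<epsilon>" if "\<epsilon> > 0" for \<epsilon>
  proof -
    obtain n where n: "(1/2::real) ^ n < \<epsilon> / 2"
      using real_arch_pow_inv[of "\<epsilon>/2" "1/2"] \<open>\<epsilon> > 0\<close> by auto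
    have small_radius: "(1/2::real) ^ snd (\<sigma> n) \<le> (1/2) ^ n"
      using radius by (intro power_decreasing) auto
    have "dist x y < \<epsilon>" if "x \<in> cond_ball dn (\<sigma> n)" "y \<in> cond_ball dn (\<sigma> n)" for x y
    proof -
      have "dist x (dn (fst (\<sigma> n))) \<le> (1/2) ^ snd (\<sigma> n)"
        "dist y (dn (fst (\<sigma> n))) \<le> (1/2) ^ snd (\<sigma> n)"
        using that by (simp_all add: cond_ball_def dist_commute)
      then show ?thesis using n small_radius dist_triangle2[of x y "dn (fst (\<sigma> n))"] by linarith
    qed
    then show ?thesis by blast
  qed
qed blast

text \<open>An infinite set Z of strategies that is almost contained in each set of
  avoiding strategies yields a point outside all the N alpha: strategies from
  Z of growing length answer the current condition, so the answers form a
  refining chain, and each answer beyond some stage avoids any given N alpha.\<close>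
lemma point_avoiding_all:
  fixes dn :: "nat \<Rightarrow> 'a::complete_space"
  assumes Z: "infinite Z"
    and almost: "\<And>\<alpha>. \<alpha> \<in> I \<Longrightarrow> finite (Z - avoiding_strategies dn (N \<alpha>) (m \<alpha>))"
    and long: "\<And>n. \<exists>\<alpha>\<in>I. n < m \<alpha>"
  shows "\<exists>x. \<forall>\<alpha>\<in>I. x \<notin> N \<alpha>"
proof -
  have "\<exists>l. l \<in> Z \<and> strategy dn l \<and> n < length l" for n
  proof -
    obtain \<alpha> where \<alpha>: "\<alpha> \<in> I" "n < m \<alpha>" using long by blast
    have "Z \<inter> avoiding_strategies dn (N \<alpha>) (m \<alpha>) \<noteq> {}"
    proof
      assume "Z \<inter> avoiding_strategies dn (N \<alpha>) (m \<alpha>) = {}"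
      then have "Z - avoiding_strategies dn (N \<alpha>) (m \<alpha>) = Z" by blast
      then show False using almost[OF \<alpha>(1)] Z by simp
    qed
    then show ?thesis using \<alpha> by (force simp: avoiding_strategies_def)
  qed
  then obtain pick where pick: "\<And>n. pick n \<in> Z \<and> strategy dn (pick n) \<and> n < length (pick n)"
    by metis
  define \<sigma> where "\<sigma> = rec_nat (0, 0) (\<lambda>i s. pick (max (to_nat s) i) ! to_nat s)"
  have \<sigma>_Suc: "\<sigma> (Suc i) = pick (max (to_nat (\<sigma> i)) i) ! to_nat (\<sigma> i)" for i
    by (simp add: \<sigma>_def)
  have "refines dn (\<sigma> i) (\<sigma> (Suc i))" for i
  proof -
    let ?l = "pick (max (to_nat (\<sigma> i)) i)"
    have "to_nat (\<sigma> i) < length ?l" "strategy dn ?l" using pick[of "max (to_nat (\<sigma> i)) i"] by auto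
    then have "refines dn (from_nat (to_nat (\<sigma> i))) (?l ! to_nat (\<sigma> i))"
      unfolding strategy_def by blast
    then show ?thesis by (simp add: \<sigma>_Suc)
  qed
  then obtain x where x: "\<And>i. x \<in> cond_ball dn (\<sigma> i)" by (rule refining_chain_point) blast
  have "x \<notin> N \<alpha>" if \<alpha>: "\<alpha> \<in> I" for \<alpha>
  proof -
    obtain L where L: "\<forall>l\<in>Z - avoiding_strategies dn (N \<alpha>) (m \<alpha>). length l \<le> L"
      using almost[OF \<alpha>]
        finite_nat_set_iff_bounded_le[of "length ` (Z - avoiding_strategies dn (N \<alpha>) (m \<alpha>))"]
      by auto
    let ?l = "pick (max (to_nat (\<sigma> L)) L)"
    have l: "?l \<in> Z" "to_nat (\<sigma> L) < length ?l" "L < length ?l"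
      using pick[of "max (to_nat (\<sigma> L)) L"] by auto
    then have "?l \<in> avoiding_strategies dn (N \<alpha>) (m \<alpha>)" using L by force
    then have "cond_ball dn (\<sigma> (Suc L)) \<inter> N \<alpha> = {}"
      using l(2) by (simp add: avoiding_strategies_def \<sigma>_Suc)
    then show ?thesis using x[of "Suc L"] by blast
  qed
  then show ?thesis by blast
qed

text \<open>The sets of avoiding strategies, indexed additionally by
  a minimal length, have infinite finite intersections and form a family
  below p, so they have an infinite pseudointersection.\<close>
theorem nowhere_dense_cover_below_p:
  fixes dn :: "nat \<Rightarrow> 'a::complete_space" and N :: "'i \<Rightarrow> 'a set"
  assumes dn_dense: "\<And>x \<epsilon>. \<epsilon> > 0 \<Longrightarrow> \<exists>i. dist (dn i) x < \<epsilon>"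
    and I: "infinite I" "below_p I"
    and N: "\<And>\<alpha>. \<alpha> \<in> I \<Longrightarrow> closed (N \<alpha>) \<and> interior (N \<alpha>) = {}"
  shows "\<exists>x. \<forall>\<alpha>\<in>I. x \<notin> N \<alpha>"
proof -
  let ?J = "I \<times> (UNIV :: nat set)"
  let ?Y = "\<lambda>\<beta>. avoiding_strategies dn (N (fst \<beta>)) (snd \<beta>)"
  have sfip: "infinite (\<Inter>\<beta>\<in>K. ?Y \<beta>)" if "finite K" "K \<noteq> {}" "K \<subseteq> ?J" for K
  proof -
    have "closed (N (fst \<beta>)) \<and> interior (N (fst \<beta>)) = {}" if "\<beta> \<in> K" for \<beta>
      using N \<open>K \<subseteq> ?J\<close> that by force
    with dn_dense \<open>finite K\<close> show ?thesis
      by (rule avoiding_strategies_infinite[where N = "\<lambda>\<beta>. N (fst \<beta>)" and m = snd])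
  qed
  obtain \<alpha> where \<alpha>: "\<alpha> \<in> I" using I(1) by fastforce
  then have "?J \<noteq> {}" by blast
  then obtain Z where Z: "infinite Z" "\<And>\<beta>. \<beta> \<in> ?J \<Longrightarrow> finite (Z - ?Y \<beta>)"
    using small_family_pseudointersection[OF below_p_Times_nat[OF I] _ sfip] by blast
  have "\<exists>\<beta>\<in>?J. n < snd \<beta>" for n using \<alpha> by (intro bexI[of _ "(\<alpha>, Suc n)"]) auto
  then obtain x where "\<forall>\<beta>\<in>?J. x \<notin> N (fst \<beta>)"
    using point_avoiding_all[where N = "\<lambda>\<beta>. N (fst \<beta>)" and m = snd, OF Z] by blast
  then show ?thesis by force
qed

section \<open>Separability of a space with an F-basis\<close>

lemma rational_combination_approx:
  fixes e :: "nat \<Rightarrow> 'a::real_normed_vector" and a :: "nat \<Rightarrow> real"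
  assumes \<epsilon>: "\<epsilon> > 0"
  shows "\<exists>l::rat list. length l = n \<and>
           norm ((\<Sum>k<n. a k *\<^sub>R e k) - (\<Sum>k<n. of_rat (l ! k) *\<^sub>R e k)) < \<epsilon>"
proof -
  define \<delta> where "\<delta> = \<epsilon> / (real n + 1)"
  have \<delta>: "\<delta> > 0" using \<epsilon> by (simp add: \<delta>_def)
  have "\<exists>q::rat. \<bar>a k - of_rat q\<bar> * (norm (e k) + 1) < \<delta>" for k
  proof -
    have pos: "norm (e k) + 1 > 0" by (simp add: add_nonneg_pos)
    obtain r where r: "r \<in> \<rat>" "\<bar>a k - r\<bar> < \<delta> / (norm (e k) + 1)"
      using Rats_dense_in_real[of "a k - \<delta> / (norm (e k) + 1)" "a k + \<delta> / (norm (e k) + 1)"] \<delta> pos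
      by (auto simp: abs_less_iff)
    then show ?thesis using pos by (auto elim!: Rats_cases simp: field_simps)
  qed
  then obtain q where q: "\<And>k. \<bar>a k - of_rat (q k)\<bar> * (norm (e k) + 1) < \<delta>" by metis
  define l where "l = map q [0..<n]"
  have "norm ((\<Sum>k<n. a k *\<^sub>R e k) - (\<Sum>k<n. of_rat (l ! k) *\<^sub>R e k))
      = norm (\<Sum>k<n. (a k - of_rat (q k)) *\<^sub>R e k)"
    by (simp add: l_def sum_subtractf scaleR_diff_left)
  also have "\<dots> \<le> (\<Sum>k<n. \<bar>a k - of_rat (q k)\<bar> * norm (e k))"
    by (rule order_trans[OF norm_sum]) simp
  also have "\<dots> \<le> (\<Sum>k<n. \<delta>)"
  proof (rule sum_mono)
    fix k
    have "\<bar>a k - of_rat (q k)\<bar> * norm (e k) \<le> \<bar>a k - of_rat (q k)\<bar> * (norm (e k) + 1)"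
      by (simp add: mult_left_mono)
    then show "\<bar>a k - of_rat (q k)\<bar> * norm (e k) \<le> \<delta>" using q[of k] by linarith
  qed
  also have "\<dots> < \<epsilon>" using \<epsilon> by (simp add: \<delta>_def field_simps)
  finally show ?thesis by (intro exI[of _ l]) (simp add: l_def)
qed

context F_basis_space
begin

text \<open>The rational combinations of the e k form a countable dense set, since
  every x is the F-limit of its partial sums.\<close>
lemma separable: "\<exists>dn :: nat \<Rightarrow> 'a. \<forall>x \<epsilon>. \<epsilon> > 0 \<longrightarrow> (\<exists>i. dist (dn i) x < \<epsilon>)"
proof -
  define f where "f l = (\<Sum>k<length l. of_rat (l ! k) *\<^sub>R e k)" for l :: "rat list"
  have "\<exists>i. dist (f (from_nat i)) x < \<epsilon>" if \<epsilon>: "\<epsilon> > 0" for x \<epsilon>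
  proof -
    obtain A where A: "A \<in> F" "\<forall>\<nu>\<in>A. norm (x - S \<nu> x) < \<epsilon> / 2"
      using partial_sum_limit[of x] \<epsilon> unfolding F_limit_def by (meson half_gt_zero)
    have "A \<noteq> {}" using filter_set_infinite[OF A(1)] by auto
    then obtain \<nu> where \<nu>: "\<nu> \<in> A" by blast
    have S\<nu>: "S \<nu> x = (\<Sum>k<Suc \<nu>. coord x k *\<^sub>R e k)"
      by (simp add: partial_sum_def lessThan_Suc_atMost)
    obtain l where l: "length l = Suc \<nu>" "norm (S \<nu> x - f l) < \<epsilon> / 2"
      using rational_combination_approx[where \<epsilon> = "\<epsilon> / 2" and a = "coord x" and e = e and n = "Suc \<nu>"] \<epsilon>
      unfolding S\<nu> f_def by auto
    have "dist (f l) x \<le> norm (x - S \<nu> x) + norm (S \<nu> x - f l)"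
      using norm_triangle_ineq[of "x - S \<nu> x" "S \<nu> x - f l"] by (simp add: dist_norm norm_minus_commute)
    moreover have "norm (x - S \<nu> x) < \<epsilon> / 2" using A \<nu> by blast
    ultimately have "dist (f (from_nat (to_nat l))) x < \<epsilon>" using l(2) by simp
    then show ?thesis by blast
  qed
  then show ?thesis by blast
qed

end

context F_basis_space
begin

text \<open>Every x lies in a level set along some set of a given base of F, since its
  partial sums F-converge to x and are therefore eventually bounded by norm x + 1.\<close>
lemma in_level_set_of_base:
  assumes "is_filter_base F B"
  shows "\<exists>C\<in>B. \<exists>m::nat. x \<in> level_set F e C (real m)"
proof -
  obtain A where A: "A \<in> F" "\<forall>\<nu>\<in>A. norm (x - S \<nu> x) < 1"
    using partial_sum_limit[of x] unfolding F_limit_def by (meson zero_less_one)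
  obtain C where C: "C \<in> B" "C \<subseteq> A" using assms A(1) unfolding is_filter_base_def by blast
  have "norm (S \<nu> x) \<le> real (nat \<lceil>norm x + 1\<rceil>)" if "\<nu> \<in> C" for \<nu>
  proof -
    have "norm (S \<nu> x) \<le> norm x + 1"
      using A C that norm_triangle_ineq2[of "S \<nu> x" x] by (force simp: norm_minus_commute)
    then show ?thesis by linarith
  qed
  then show ?thesis using C unfolding level_set_def by blast
qed

lemma bounded_along_finite_base:
  assumes base: "is_filter_base F B" and "finite B"
  shows "\<exists>A\<in>F. X_sub F e A = UNIV"
proof -
  have "B \<subseteq> F" "B \<noteq> {}"
    using base nat_filter_nonempty[OF filter] unfolding is_filter_base_def by blast+
  then have "\<Inter>B \<in> F" using nat_filter_Inter[OF filter \<open>finite B\<close>] by blast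
  moreover have "x \<in> X_sub F e (\<Inter>B)" for x
  proof -
    obtain C m where "C \<in> B" "x \<in> level_set F e C (real m)"
      using in_level_set_of_base[OF base] by blast
    then have "\<forall>\<nu>\<in>\<Inter>B. norm (S \<nu> x) \<le> real m" unfolding level_set_def by blast
    then show ?thesis unfolding X_sub_def by (intro CollectI bdd_aboveI2) blast
  qed
  ultimately show ?thesis by blast
qed

text \<open>An infinite base below p: if no set of the base worked, the closures of
  all level sets along sets of the base would be nowhere dense; being fewer
  than p, they could not cover the space, contradicting in_level_set_of_base.\<close>
lemma bounded_along_small_base:
  assumes base: "is_filter_base F B" and B: "infinite B" "below_p B"
  shows "\<exists>A\<in>F. X_sub F e A = UNIV"
proof (rule ccontr)
  assume none: "\<not> (\<exists>A\<in>F. X_sub F e A = UNIV)"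
  let ?I = "B \<times> (UNIV :: nat set)"
  define N where "N \<beta> = closure (level_set F e (fst \<beta>) (real (snd \<beta>)))" for \<beta>
  have "closed (N \<beta>) \<and> interior (N \<beta>) = {}" if "\<beta> \<in> ?I" for \<beta>
  proof -
    have "fst \<beta> \<in> F" using base that unfolding is_filter_base_def by auto
    then show ?thesis
      using X_sub_UNIV_if_level_set_somewhere_dense[of "fst \<beta>" "real (snd \<beta>)"] none
      unfolding N_def by auto
  qed
  moreover obtain dn :: "nat \<Rightarrow> 'a" where "\<And>x \<epsilon>. \<epsilon> > 0 \<Longrightarrow> \<exists>i. dist (dn i) x < \<epsilon>"
    using separable by blast
  moreover have "infinite ?I" "below_p ?I"
    using B below_p_Times_nat by (auto simp: finite_cartesian_product_iff)
  ultimately obtain x where x: "\<forall>\<beta>\<in>?I. x \<notin> N \<beta>"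
    using nowhere_dense_cover_below_p by metis
  obtain C m where "C \<in> B" "x \<in> level_set F e C (real m)"
    using in_level_set_of_base[OF base] by blast
  then show False using x closure_subset unfolding N_def by fastforce
qed

end

theorem proposition2p2:
  fixes F :: "nat set set" and e :: "nat \<Rightarrow> 'a::banach"
  assumes "is_nat_filter F"
    and "character_lt_p F"
    and "F_basis F e"
  shows "\<exists>A\<in>F. X_sub F e A = UNIV"
proof -
  interpret F_basis_space F e using assms(1,3) by unfold_locales
  obtain B where base: "is_filter_base F B" and small: "below_p B"
    using assms(2) unfolding character_lt_p_def below_p_def by blast
  show ?thesis
  proof (cases "finite B")
    case True
    then show ?thesis using bounded_along_finite_base[OF base] by blast
  next
    case False
    then show ?thesis using bounded_along_small_base[OF base _ small] by blast
  qed
qed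

end
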